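(* Let $\mathcal{B}$ be a base, $P=\{p_1,\dots,p_n\}$ and $S$ atomic multisets, and $q$ an atom. The following are equivalent: (1) $P,S\vdash_{\mathcal{B}}q$; (2) for every base $\mathcal{C}\supseteq\mathcal{B}$ and all atomic multisets $T_1,\dots,T_n$ with $T_i\vdash_{\mathcal{C}}p_i$ for each $i=1,\dots,n$, we have $T_1,\dots,T_n,S\vdash_{\mathcal{C}}q$.
   Context: Fix a set $\mathbb{A}$ of atoms; atomic multisets are finite multisets of atoms, "$P,Q$" denotes multiset union. An atomic sequent is $P\Rightarrow p$ with $P$ an atomic multiset, $p$ an atom. An atomic box is a multiset of atomic sequents. An atomic rule is a triple $\langle\mathbf{A},\mathbf{S},p\rangle$ with $\mathbf{A}$ a multiset of atomic boxes, $\mathbf{S}$ an atomic box, $p$ an atom. A base is a set of atomic rules. An atom $p$ is persistent in $\mathcal{B}$ if some $\langle\varnothing,\mathbf{S},p\rangle\in\mathcal{B}$ has $\mathbf{S}\neq\varnothing$. Derivability $\vdash_{\mathcal{B}}$ is defined inductively: (Ref) $p\vdash_{\mathcal{B}}p$; (App) if $\langle\mathbf{A},\mathbf{S},p\rangle\in\mathcal{B}$ with $\mathbf{A}=\{\mathbf{T}_1,\dots,\mathbf{T}_m\}$, and there are atomic multisets $C_1,\dots,C_n$ ($n\ge m$) and a multiset $D=\{d_{m+1},\dots,d_n\}$ of atoms persistent in $\mathcal{B}$ such that $C_i,Q\vdash_{\mathcal{B}}q$ for every $i\le m$ and every $Q\Rightarrow q\in\mathbf{T}_i$, $C_j\vdash_{\mathcal{B}}d_j$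 for every $m<j\le n$, and $D,U\vdash_{\mathcal{B}}v$ for every $U\Rightarrow v\in\mathbf{S}$, then $C_1,\dots,C_n\vdash_{\mathcal{B}}p$. *)

theory Defs
  imports "HOL-Library.Multiset"
begin

type_synonym 'a aseq = "'a multiset \<times> 'a"
type_synonym 'a abox = "'a aseq multiset"
type_synonym 'a arule = "'a abox multiset \<times> 'a abox \<times> 'a"
type_synonym 'a base = "'a arule set"

definition persistent :: "'a base \<Rightarrow> 'a \<Rightarrow> bool" where
  "persistent B p \<longleftrightarrow> (\<exists>S. ({#}, S, p) \<in> B \<and> S \<noteq> {#})"

text \<open>derives B P p means P |-_B p. In (App), the boxes T_1..T_m are listed as Ts,
  the multisets C_1..C_n as Cs (n = length Cs >= m), and the atoms d_(m+1)..d_n as ds.\<close>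

inductive derives :: "'a base \<Rightarrow> 'a multiset \<Rightarrow> 'a \<Rightarrow> bool" for B :: "'a base" where
  Ref: "derives B {#p#} p"
| App: "\<lbrakk> (A, S, p) \<in> B;
          mset Ts = A;
          length Ts \<le> length Cs;
          length ds = length Cs - length Ts;
          \<forall>i < length Ts. \<forall>Qq \<in># Ts ! i. derives B (Cs ! i + fst Qq) (snd Qq);
          \<forall>j < length ds. persistent B (ds ! j) \<and> derives B (Cs ! (length Ts + j)) (ds ! j);
          \<forall>Uv \<in># S. derives B (mset ds + fst Uv) (snd Uv) \<rbrakk>
        \<Longrightarrow> derives B (sum_list Cs) p"

end

theory Submission
  imports Defs
begin

text \<open>Direction (1) \<Longrightarrow> (2) rests on two facts: derivability is monotone in the base, and
  cut is admissible, i.e. a hypothesis occurrence of p can be replaced by any T with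
  T \<turnstile> p. Cut is proved by induction on the derivation: the occurrence of p lies in one
  context C_k of an (App) step and is pushed into exactly the premises that use C_k; the
  premises D, U \<turnstile> v for the conclusion box S carry no context, so they are untouched.
  Cutting the p_i one at a time gives (2). For (2) \<Longrightarrow> (1) take the base itself and
  T_i = {p_i}, derivable by (Ref).\<close>

lemma persistent_mono: "persistent B p \<Longrightarrow> B \<subseteq> C \<Longrightarrow> persistent C p"
  unfolding persistent_def by blast

lemma derives_mono:
  assumes "derives B P p" "B \<subseteq> C"
  shows "derives C P p"
  using assms(1)
proof (induction rule: derives.induct)
  case (Ref p)
  show ?case by (rule derives.Ref)
next
  case (App A S p Ts Cs ds)
  show ?case
  proof (rule derives.App[of A S p C Ts Cs ds])
    show "(A, S, p) \<in> C" using App.hyps(1) assms(2) by blast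
  qed (use App.hyps App.IH persistent_mono[OF _ assms(2)] in auto)
qed

lemma sum_list_update_add:
  fixes xs :: "'b::comm_monoid_add list"
  shows "k < length xs \<Longrightarrow> sum_list (xs[k := y]) + xs ! k = sum_list xs + y"
  by (induction xs arbitrary: k) (auto simp: ac_simps split: nat.split)

lemma mem_sum_list_multiset:
  "x \<in># sum_list Ms \<longleftrightarrow> (\<exists>k < length Ms. x \<in># Ms ! k)"
  by (auto simp: sum_mset_sum_list[symmetric] in_set_conv_nth) (metis nth_mem)

lemma derives_cut:
  assumes "derives C D q" "p \<in># D" "derives C T p"
  shows "derives C (T + (D - {#p#})) q"
  using assms(1,2)
proof (induction rule: derives.induct)
  case (Ref r)
  then show ?case using assms(3) by simp
next
  case (App A S r Ts Cs ds)
  obtain k where k: "k < length Cs" "p \<in># Cs ! k"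
    using App.prems mem_sum_list_multiset by metis
  define Cs' where "Cs' = Cs[k := T + (Cs ! k - {#p#})]"
  have sum_Cs': "sum_list Cs' = T + (sum_list Cs - {#p#})"
  proof -
    have "sum_list Cs' + Cs ! k = T + (Cs ! k - {#p#}) + sum_list Cs"
      unfolding Cs'_def using sum_list_update_add[OF k(1)] by (simp add: ac_simps)
    also have "\<dots> = T + (sum_list Cs - {#p#}) + Cs ! k"
      using k(2) App.prems by (simp add: ac_simps)
    finally show ?thesis by simp
  qed
  have replace_context: "derives C (Cs' ! i + X) u"
    if "i < length Cs" "derives C (Cs ! i + X) u"
      "p \<in># Cs ! i + X \<longrightarrow> derives C (T + (Cs ! i + X - {#p#})) u" for i X u
  proof (cases "i = k")
    case True
    then show ?thesis using that k by (simp add: Cs'_def ac_simps)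
  next
    case False
    then show ?thesis using that by (simp add: Cs'_def)
  qed
  have "derives C (sum_list Cs') r"
  proof (rule derives.App[of A S r C Ts Cs' ds])
    show "(A, S, r) \<in> C" "mset Ts = A" "length Ts \<le> length Cs'"
      "length ds = length Cs' - length Ts"
      using App.hyps by (auto simp: Cs'_def)
    show "\<forall>i<length Ts. \<forall>Qq\<in>#Ts ! i. derives C (Cs' ! i + fst Qq) (snd Qq)"
    proof (intro allI impI ballI)
      fix i Qq assume "i < length Ts" "Qq \<in># Ts ! i"
      then show "derives C (Cs' ! i + fst Qq) (snd Qq)"
        using App.IH(1) App.hyps(3) by (intro replace_context) auto
    qed
    show "\<forall>j<length ds. persistent C (ds ! j) \<and> derives C (Cs' ! (length Ts + j)) (ds ! j)"
      using App.IH(2) App.hyps(4) replace_context[where X = "{#}"] by auto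
    show "\<forall>Uv\<in>#S. derives C (mset ds + fst Uv) (snd Uv)"
      using App.IH(3) by blast
  qed
  then show ?case by (simp add: sum_Cs')
qed

lemma derives_cut_list:
  assumes "list_all2 (derives C) Ts ps" "derives C (mset ps + S) q"
  shows "derives C (sum_list Ts + S) q"
  using assms
proof (induction arbitrary: S rule: list_all2_induct)
  case Nil
  then show ?case by simp
next
  case (Cons T Ts p ps)
  have "derives C (sum_list Ts + add_mset p S) q"
    using Cons.IH[of "add_mset p S"] Cons.prems by simp
  then have "derives C (T + (sum_list Ts + S)) q"
    using derives_cut[OF _ _ Cons.hyps(1)] by fastforce
  then show ?case by (simp add: ac_simps)
qed

theorem lemma1:
  fixes B :: "'a base" and ps :: "'a list" and S :: "'a multiset" and q :: 'a
  shows "derives B (mset ps + S) q \<longleftrightarrow>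
    (\<forall>C. B \<subseteq> C \<longrightarrow>
      (\<forall>Ts :: 'a multiset list. length Ts = length ps \<longrightarrow>
         (\<forall>i < length ps. derives C (Ts ! i) (ps ! i)) \<longrightarrow>
         derives C (sum_list Ts + S) q))"
proof (intro iffI allI impI)
  fix C and Ts :: "'a multiset list"
  assume "derives B (mset ps + S) q" "B \<subseteq> C" "length Ts = length ps"
    "\<forall>i < length ps. derives C (Ts ! i) (ps ! i)"
  then show "derives C (sum_list Ts + S) q"
    using derives_cut_list derives_mono by (metis list_all2_conv_all_nth)
next
  assume "\<forall>C. B \<subseteq> C \<longrightarrow>
      (\<forall>Ts :: 'a multiset list. length Ts = length ps \<longrightarrow>
         (\<forall>i < length ps. derives C (Ts ! i) (ps ! i)) \<longrightarrow>
         derives C (sum_list Ts + S) q)"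
  from this[rule_format, of B "map (\<lambda>p. {#p#}) ps"]
  have "derives B (sum_list (map (\<lambda>p. {#p#}) ps) + S) q"
    by (simp add: derives.Ref)
  then show "derives B (mset ps + S) q"
    by (simp add: sum_mset_sum_list[symmetric])
qed

end
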